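(* Let $\rho$ be a function quasi-norm over a $\sigma$-finite measure space $(\Omega,\Sigma,\mu)$ and suppose that $f\in L_0^+(\mu)$ with $\rho(f)<\infty$ is dominating. Then for every quasi-Banach space $X$ and every sequence $(x_n)$ of measurable functions $\Omega\to X$ with $\lim_nx_n=x$ a.e. and $\|x_n\|\le f$ a.e. for all $n$, we have $\lim_n\rho(\|x_n-x\|)=0$, i.e. $x_n\to x$ in $L_\rho(X)$.
   Context: $L_0^+(\mu)$: measurable functions $\Omega\to[0,\infty]$ modulo a.e. equality. A function quasi-norm is $\rho\colon L_0^+(\mu)\to[0,\infty]$ with (F1) $\rho(tf)=t\rho(f)$, $t\ge0$; (F2) $f\le g$ a.e. $\Rightarrow\rho(f)\le\rho(g)$; (F3) $\rho(\chi_E)<\infty$ if $\mu(E)<\infty$; (F4) for all $E$ with $\mu(E)<\infty$ and $\varepsilon>0$ there is $\delta>0$ with $\mu(A)\le\varepsilon$ whenever $A\subseteq E$ measurable and $\rho(\chi_A)\le\delta$; (F5) $\rho(f+g)\le\kappa(\rho(f)+\rho(g))$. $L_\rho(X)$ is the space of measurable $g\colon\Omega\to X$ with $\rho(\|g\|)<\infty$, quasi-normed by $\rho(\|g\|)$. A function $f\in L_0^+(\mu)$ with $\rho(f)<\infty$ is dominating if $\lim_n\rho(f_n)=0$ for every non-increasing sequence $(f_n)$ in $L_0^+(\mu)$ with $f_1\le f$ and $\lim_nf_n=0$ a.e. *)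

theory Defs
  imports "HOL-Analysis.Analysis"
begin

text \<open>L_0^+(mu) is represented by Borel measurable functions into [0,\<infinity>] (type ennreal);
  the quasi-norm rho is a map on such functions, constrained only on measurable ones.
  Axiom (F2) (stated a.e.) makes rho well defined on a.e.-classes.\<close>

definition function_quasi_norm :: "'a measure \<Rightarrow> (('a \<Rightarrow> ennreal) \<Rightarrow> ennreal) \<Rightarrow> bool" where
  "function_quasi_norm M \<rho> \<longleftrightarrow>
     \<comment> \<open>(F1)\<close>
     (\<forall>f \<in> borel_measurable M. \<forall>t::real. t \<ge> 0 \<longrightarrow>
        \<rho> (\<lambda>\<omega>. ennreal t * f \<omega>) = ennreal t * \<rho> f) \<and>
     \<comment> \<open>(F2)\<close>
     (\<forall>f \<in> borel_measurable M. \<forall>g \<in> borel_measurable M.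
        (AE \<omega> in M. f \<omega> \<le> g \<omega>) \<longrightarrow> \<rho> f \<le> \<rho> g) \<and>
     \<comment> \<open>(F3)\<close>
     (\<forall>E \<in> sets M. emeasure M E < \<infinity> \<longrightarrow> \<rho> (indicator E) < \<infinity>) \<and>
     \<comment> \<open>(F4)\<close>
     (\<forall>E \<in> sets M. emeasure M E < \<infinity> \<longrightarrow>
        (\<forall>\<epsilon>::real. \<epsilon> > 0 \<longrightarrow> (\<exists>\<delta>::real. \<delta> > 0 \<and>
           (\<forall>A \<in> sets M. A \<subseteq> E \<longrightarrow> \<rho> (indicator A) \<le> ennreal \<delta> \<longrightarrow>
              emeasure M A \<le> ennreal \<epsilon>)))) \<and>
     \<comment> \<open>(F5)\<close>
     (\<exists>\<kappa>::real. \<forall>f \<in> borel_measurable M. \<forall>g \<in> borel_measurable M.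
        \<rho> (\<lambda>\<omega>. f \<omega> + g \<omega>) \<le> ennreal \<kappa> * (\<rho> f + \<rho> g))"

definition dominating :: "'a measure \<Rightarrow> (('a \<Rightarrow> ennreal) \<Rightarrow> ennreal) \<Rightarrow> ('a \<Rightarrow> ennreal) \<Rightarrow> bool" where
  "dominating M \<rho> f \<longleftrightarrow> f \<in> borel_measurable M \<and> \<rho> f < \<infinity> \<and>
     (\<forall>fs :: nat \<Rightarrow> 'a \<Rightarrow> ennreal.
        (\<forall>n. fs n \<in> borel_measurable M) \<longrightarrow>
        (\<forall>n. AE \<omega> in M. fs (Suc n) \<omega> \<le> fs n \<omega>) \<longrightarrow>
        (AE \<omega> in M. fs 0 \<omega> \<le> f \<omega>) \<longrightarrow>
        (AE \<omega> in M. (\<lambda>n. fs n \<omega>) \<longlonglongrightarrow> 0) \<longrightarrow>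
        (\<lambda>n. \<rho> (fs n)) \<longlonglongrightarrow> 0)"

definition quasi_banach :: "('b::real_vector \<Rightarrow> real) \<Rightarrow> bool" where
  "quasi_banach q \<longleftrightarrow>
     (\<forall>x. 0 \<le> q x) \<and> (\<forall>x. q x = 0 \<longleftrightarrow> x = 0) \<and>
     (\<forall>a x. q (a *\<^sub>R x) = \<bar>a\<bar> * q x) \<and>
     (\<exists>C. \<forall>x y. q (x + y) \<le> C * (q x + q y)) \<and>
     (\<forall>s :: nat \<Rightarrow> 'b. (\<forall>e>0. \<exists>N. \<forall>m\<ge>N. \<forall>n\<ge>N. q (s m - s n) < e) \<longrightarrow>
        (\<exists>l. (\<lambda>n. q (s n - l)) \<longlonglongrightarrow> 0))"

text \<open>Measurable X-valued functions (strongly measurable): a.e. limits of simple functions.\<close>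
definition strongly_measurable :: "'a measure \<Rightarrow> ('b::real_vector \<Rightarrow> real) \<Rightarrow> ('a \<Rightarrow> 'b) \<Rightarrow> bool" where
  "strongly_measurable M q g \<longleftrightarrow>
     (\<exists>s :: nat \<Rightarrow> 'a \<Rightarrow> 'b. (\<forall>k. simple_function M (s k)) \<and>
        (AE \<omega> in M. (\<lambda>k. q (s k \<omega> - g \<omega>)) \<longlonglongrightarrow> 0))"

text \<open>rho applied to an arbitrary nonnegative function (outer extension); it coincides with
  rho on (a.e.-classes of) measurable functions.\<close>
definition rho_ext :: "'a measure \<Rightarrow> (('a \<Rightarrow> ennreal) \<Rightarrow> ennreal) \<Rightarrow> ('a \<Rightarrow> ennreal) \<Rightarrow> ennreal" where
  "rho_ext M \<rho> g = (INF h \<in> {h \<in> borel_measurable M. AE \<omega> in M. g \<omega> \<le> h \<omega>}. \<rho> h)"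

end

theory Submission
  imports Defs
begin

text \<open>
  As x is only an a.e. limit and q need not be continuous, \<omega> \<mapsto> q (x_n \<omega> - x \<omega>)
  need not be measurable, so it is replaced by a measurable majorant. Approximate each x_k
  a.e. by simple functions s_kj and let E_k = liminf_j liminf_m liminf_i C^3 q (s_kj - s_mi)
  (\<open>approx_dist\<close>), with C the quasi-triangle constant. E_k is measurable, and the
  quasi-triangle inequality along the path x_k, s_kj, s_mi, x_m, x squeezes it between
  q (x_k - x) and C^6 q (x_k - x). Hence the tail suprema H_n = sup_(k \<ge> n) E_k decrease
  to 0 a.e. and are bounded by a multiple of f. A positive multiple of a dominating function
  is dominating, so \<rho> H_n \<rightarrow> 0, and H_n majorizes q (x_n - x). Only axiom (F1) of \<rho>
  is needed.
\<close>

lemma tendsto_ennreal_cmult_0: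
  fixes g :: "nat \<Rightarrow> real"
  assumes "g \<longlonglongrightarrow> 0"
  shows "(\<lambda>n. ennreal (c * g n)) \<longlonglongrightarrow> 0"
  using tendsto_ennrealI[OF tendsto_mult_right_zero[OF assms, of c]] by simp

lemma Liminf_le_add_of_le_add_tendsto:
  fixes X Y :: "nat \<Rightarrow> ennreal"
  assumes "\<And>i. X i \<le> c + Y i" and "Y \<longlonglongrightarrow> d"
  shows "liminf X \<le> c + d"
proof -
  have "liminf X \<le> liminf (\<lambda>i. c + Y i)"
    using assms(1) by (intro Liminf_mono) auto
  also have "\<dots> = c + d"
    using assms(2) by (intro lim_imp_Liminf tendsto_add tendsto_const) auto
  finally show ?thesis .
qed

lemma le_Liminf_add_of_le_add_tendsto:
  fixes X Y :: "nat \<Rightarrow> ennreal"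
  assumes "\<And>i. c \<le> X i + Y i" and "Y \<longlonglongrightarrow> d"
  shows "c \<le> liminf X + d"
proof (rule ennreal_le_epsilon)
  fix e :: real
  assume "liminf X + d < top" and "0 < e"
  then have "d < d + ennreal e"
    by (cases d rule: ennreal_cases) (auto simp: top_unique ennreal_less_iff simp flip: ennreal_plus)
  then have "eventually (\<lambda>i. Y i < d + ennreal e) sequentially"
    by (rule order_tendstoD(2)[OF assms(2)])
  then have "liminf (\<lambda>_. c) \<le> liminf (\<lambda>i. X i + (d + ennreal e))"
    by (intro Liminf_mono, rule eventually_mono)
       (metis assms(1) add_left_mono less_imp_le order_trans)
  then show "c \<le> liminf X + d + ennreal e"
    by (simp add: Liminf_const Liminf_add_const add.assoc)
qed

lemma tendsto_tail_SUP_0: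
  fixes X :: "nat \<Rightarrow> ennreal"
  assumes "X \<longlonglongrightarrow> 0"
  shows "(\<lambda>n. SUP k\<in>{n..}. X k) \<longlonglongrightarrow> 0"
proof -
  have "(\<lambda>n. SUP k\<in>{n..}. X k) \<longlonglongrightarrow> (INF n. SUP k\<in>{n..}. X k)"
    by (intro LIMSEQ_INF antimonoI SUP_subset_mono) auto
  also have "(INF n. SUP k\<in>{n..}. X k) = 0"
    using lim_imp_Limsup[OF _ assms] by (simp add: limsup_INF_SUP)
  finally show ?thesis .
qed

lemma strongly_measurable_approximations:
  assumes "\<And>n. strongly_measurable M q (xs n)"
  obtains s where "\<And>n k. simple_function M (s n k)"
    and "\<And>n. AE \<omega> in M. (\<lambda>k. q (s n k \<omega> - xs n \<omega>)) \<longlonglongrightarrow> 0"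
proof -
  have "\<forall>n. \<exists>sn. (\<forall>k. simple_function M (sn k)) \<and> (AE \<omega> in M. (\<lambda>k. q (sn k \<omega> - xs n \<omega>)) \<longlonglongrightarrow> 0)"
    using assms unfolding strongly_measurable_def by blast
  then obtain s where "\<forall>n. (\<forall>k. simple_function M (s n k)) \<and> (AE \<omega> in M. (\<lambda>k. q (s n k \<omega> - xs n \<omega>)) \<longlonglongrightarrow> 0)"
    by (auto dest: choice)
  then show thesis
    using that by blast
qed

locale quasi_norm =
  fixes q :: "'b::real_vector \<Rightarrow> real" and C :: real
  assumes nonneg [simp]: "0 \<le> q x"
    and minus [simp]: "q (- x) = q x"
    and triangle: "q (x + y) \<le> C * (q x + q y)"
    and one_le_C: "1 \<le> C"
begin

lemma diff_commute: "q (a - b) = q (b - a)"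
  using minus[of "a - b"] by simp

lemma triangle_diff: "q (a - c) \<le> C * q (a - b) + C * q (b - c)"
  using triangle[of "a - b" "b - c"] by (simp add: algebra_simps)

lemma triangle_path4: "q (a - e) \<le> C^3 * (q (a - b) + q (b - c) + q (c - d) + q (d - e))"
proof -
  have C0: "0 \<le> C" using one_le_C by simp
  have "q (c - e) \<le> C * q (c - d) + C * q (d - e)" by (rule triangle_diff)
  moreover have "q (b - e) \<le> C * q (b - c) + C * q (c - e)" by (rule triangle_diff)
  moreover have "q (a - e) \<le> C * q (a - b) + C * q (b - e)" by (rule triangle_diff)
  ultimately have "q (a - e) \<le> C * q (a - b) + C * (C * q (b - c) + C * (C * q (c - d) + C * q (d - e)))"
    using mult_left_mono[OF _ C0] by (smt (verit))
  also have "\<dots> = C * q (a - b) + C^2 * q (b - c) + C^3 * q (c - d) + C^3 * q (d - e)"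
    by (simp add: algebra_simps power2_eq_square power3_eq_cube)
  also have "\<dots> \<le> C^3 * q (a - b) + C^3 * q (b - c) + C^3 * q (c - d) + C^3 * q (d - e)"
    using one_le_C by (intro add_mono mult_right_mono power_increasing[of 1 3 C, simplified]
        power_increasing[of 2 3 C]) auto
  finally show ?thesis by (simp add: algebra_simps)
qed

lemma ennreal_triangle_path4:
  assumes "0 \<le> t"
  shows "ennreal (t * q (a - e)) \<le> ennreal (t * C^3 * q (a - b)) + ennreal (t * C^3 * q (b - c))
    + ennreal (t * C^3 * q (c - d)) + ennreal (t * C^3 * q (d - e))"
proof -
  have "t * q (a - e) \<le> t * (C^3 * (q (a - b) + q (b - c) + q (c - d) + q (d - e)))"
    using triangle_path4 assms by (rule mult_left_mono)
  then have "ennreal (t * q (a - e)) \<le> ennreal (t * C^3 * q (a - b) + t * C^3 * q (b - c)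
      + t * C^3 * q (c - d) + t * C^3 * q (d - e))"
    by (intro ennreal_leI) (simp add: algebra_simps)
  also have "\<dots> = ennreal (t * C^3 * q (a - b)) + ennreal (t * C^3 * q (b - c))
      + ennreal (t * C^3 * q (c - d)) + ennreal (t * C^3 * q (d - e))"
    using assms one_le_C by (simp add: ennreal_plus)
  finally show ?thesis .
qed

definition approx_dist :: "(nat \<Rightarrow> 'b) \<Rightarrow> (nat \<Rightarrow> nat \<Rightarrow> 'b) \<Rightarrow> ennreal" where
  "approx_dist u v = liminf (\<lambda>j. liminf (\<lambda>m. liminf (\<lambda>i. ennreal (C^3 * q (u j - v m i)))))"

context
  fixes u :: "nat \<Rightarrow> 'b" and v :: "nat \<Rightarrow> nat \<Rightarrow> 'b" and w :: "nat \<Rightarrow> 'b" and a b :: 'b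
  assumes u: "(\<lambda>j. q (u j - a)) \<longlonglongrightarrow> 0"
    and w: "(\<lambda>m. q (w m - b)) \<longlonglongrightarrow> 0"
    and v: "\<And>m. (\<lambda>i. q (v m i - w m)) \<longlonglongrightarrow> 0"
begin

lemma le_approx_dist: "ennreal (q (a - b)) \<le> approx_dist u v"
proof -
  let ?K = "C^3"
  have u': "(\<lambda>j. q (a - u j)) \<longlonglongrightarrow> 0"
    using u by (simp add: diff_commute[of a])
  have inner: "ennreal (q (a - b)) \<le> liminf (\<lambda>i. ennreal (?K * q (u j - v m i)))
      + (ennreal (?K * q (a - u j)) + ennreal (?K * q (w m - b)) + 0)" for j m
  proof (rule le_Liminf_add_of_le_add_tendsto)
    show "ennreal (q (a - b)) \<le> ennreal (?K * q (u j - v m i))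
        + (ennreal (?K * q (a - u j)) + ennreal (?K * q (w m - b)) + ennreal (?K * q (v m i - w m)))" for i
      using ennreal_triangle_path4[of 1 a b "u j" "v m i" "w m"] by (simp add: ac_simps)
    show "(\<lambda>i. ennreal (?K * q (a - u j)) + ennreal (?K * q (w m - b)) + ennreal (?K * q (v m i - w m)))
        \<longlonglongrightarrow> ennreal (?K * q (a - u j)) + ennreal (?K * q (w m - b)) + 0"
      by (intro tendsto_add tendsto_const tendsto_ennreal_cmult_0 v)
  qed
  have middle: "ennreal (q (a - b)) \<le> liminf (\<lambda>m. liminf (\<lambda>i. ennreal (?K * q (u j - v m i))))
      + (ennreal (?K * q (a - u j)) + 0)" for j
  proof (rule le_Liminf_add_of_le_add_tendsto)
    show "ennreal (q (a - b)) \<le> liminf (\<lambda>i. ennreal (?K * q (u j - v m i)))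
        + (ennreal (?K * q (a - u j)) + ennreal (?K * q (w m - b)))" for m
      using inner[of j m] by simp
    show "(\<lambda>m. ennreal (?K * q (a - u j)) + ennreal (?K * q (w m - b)))
        \<longlonglongrightarrow> ennreal (?K * q (a - u j)) + 0"
      by (intro tendsto_add tendsto_const tendsto_ennreal_cmult_0 w)
  qed
  have "ennreal (q (a - b)) \<le> approx_dist u v + 0"
    unfolding approx_dist_def
  proof (rule le_Liminf_add_of_le_add_tendsto)
    show "ennreal (q (a - b)) \<le> liminf (\<lambda>m. liminf (\<lambda>i. ennreal (?K * q (u j - v m i))))
        + ennreal (?K * q (a - u j))" for j
      using middle[of j] by simp
    show "(\<lambda>j. ennreal (?K * q (a - u j))) \<longlonglongrightarrow> 0"
      by (rule tendsto_ennreal_cmult_0[OF u'])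
  qed
  then show ?thesis by simp
qed

lemma approx_dist_le: "approx_dist u v \<le> ennreal (C^3 * C^3 * q (a - b))"
proof -
  let ?K = "C^3"
  have K: "0 \<le> ?K" using one_le_C by simp
  have b': "(\<lambda>m. q (b - w m)) \<longlonglongrightarrow> 0" and v': "(\<lambda>i. q (w m - v m i)) \<longlonglongrightarrow> 0" for m
    using w v[of m] by (simp_all add: diff_commute[of b] diff_commute[of "w m"])
  have inner: "liminf (\<lambda>i. ennreal (?K * q (u j - v m i))) \<le>
      ennreal (?K * ?K * q (u j - a)) + ennreal (?K * ?K * q (a - b)) + ennreal (?K * ?K * q (b - w m)) + 0"
    for j m
  proof (rule Liminf_le_add_of_le_add_tendsto)
    show "ennreal (?K * q (u j - v m i)) \<le>
        ennreal (?K * ?K * q (u j - a)) + ennreal (?K * ?K * q (a - b)) + ennreal (?K * ?K * q (b - w m))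
        + ennreal (?K * ?K * q (w m - v m i))" for i
      by (rule ennreal_triangle_path4[OF K])
    show "(\<lambda>i. ennreal (?K * ?K * q (w m - v m i))) \<longlonglongrightarrow> 0"
      by (rule tendsto_ennreal_cmult_0[OF v'])
  qed
  have middle: "liminf (\<lambda>m. liminf (\<lambda>i. ennreal (?K * q (u j - v m i)))) \<le>
      ennreal (?K * ?K * q (u j - a)) + ennreal (?K * ?K * q (a - b)) + 0" for j
  proof (rule Liminf_le_add_of_le_add_tendsto)
    show "(\<lambda>m. ennreal (?K * ?K * q (b - w m))) \<longlonglongrightarrow> 0"
      by (rule tendsto_ennreal_cmult_0[OF b'])
  qed (use inner in simp)
  have "approx_dist u v \<le> ennreal (?K * ?K * q (a - b)) + 0"
    unfolding approx_dist_def
  proof (rule Liminf_le_add_of_le_add_tendsto)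
    show "(\<lambda>j. ennreal (?K * ?K * q (u j - a))) \<longlonglongrightarrow> 0"
      by (rule tendsto_ennreal_cmult_0[OF u])
  qed (use middle in \<open>simp add: add.commute\<close>)
  then show ?thesis by simp
qed

end

lemma limit_le:
  assumes "(\<lambda>m. q (y m - z)) \<longlonglongrightarrow> 0" and "\<And>m. ennreal (q (y m)) \<le> F"
  shows "ennreal (q z) \<le> ennreal C * F"
proof (rule LIMSEQ_le_const)
  have "(\<lambda>m. q (z - y m)) \<longlonglongrightarrow> 0"
    using assms(1) by (simp add: diff_commute[of z])
  then show "(\<lambda>m. ennreal C * F + ennreal (C * q (z - y m))) \<longlonglongrightarrow> ennreal C * F"
    using tendsto_add[OF tendsto_const tendsto_ennreal_cmult_0] by fastforce
  have "ennreal (q z) \<le> ennreal C * F + ennreal (C * q (z - y m))" for m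
  proof -
    have "q z \<le> C * q (y m) + C * q (z - y m)"
      using triangle[of "y m" "z - y m"] by (simp add: algebra_simps)
    then have "ennreal (q z) \<le> ennreal (C * q (y m)) + ennreal (C * q (z - y m))"
      using one_le_C by (simp add: ennreal_leI flip: ennreal_plus)
    also have "\<dots> \<le> ennreal C * F + ennreal (C * q (z - y m))"
      using assms(2) one_le_C by (auto simp: ennreal_mult intro: add_right_mono mult_left_mono)
    finally show ?thesis .
  qed
  then show "\<exists>N. \<forall>m\<ge>N. ennreal (q z) \<le> ennreal C * F + ennreal (C * q (z - y m))"
    by blast
qed

lemma dist_to_limit_le:
  assumes "(\<lambda>m. q (y m - z)) \<longlonglongrightarrow> 0" and "\<And>m. ennreal (q (y m)) \<le> F"
  shows "ennreal (q (y n - z)) \<le> ennreal (C * (1 + C)) * F"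
proof -
  have "q (y n - z) \<le> C * q (y n) + C * q z"
    using triangle[of "y n" "- z"] by (simp add: algebra_simps)
  then have "ennreal (q (y n - z)) \<le> ennreal C * ennreal (q (y n)) + ennreal C * ennreal (q z)"
    using one_le_C by (simp add: ennreal_leI flip: ennreal_plus ennreal_mult)
  also have "\<dots> \<le> ennreal C * F + ennreal C * (ennreal C * F)"
    using assms(2)[of n] limit_le[OF assms] by (intro add_mono mult_left_mono) auto
  also have "\<dots> = ennreal (C * (1 + C)) * F"
    using one_le_C by (simp add: ennreal_mult ennreal_plus algebra_simps)
  finally show ?thesis .
qed

lemma tail_SUP_approx_dist:
  fixes s :: "nat \<Rightarrow> nat \<Rightarrow> 'b" and y :: "nat \<Rightarrow> 'b"
  assumes s: "\<And>k. (\<lambda>j. q (s k j - y k)) \<longlonglongrightarrow> 0"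
    and y: "(\<lambda>n. q (y n - z)) \<longlonglongrightarrow> 0"
    and bound: "\<And>n. ennreal (q (y n)) \<le> F"
  defines "H n \<equiv> SUP k\<in>{n..}. approx_dist (s k) s"
  shows "ennreal (q (y n - z)) \<le> H n"
    and "H \<longlonglongrightarrow> 0"
    and "H 0 \<le> ennreal (C^3 * C^3 * (C * (1 + C))) * F"
proof -
  have lower: "ennreal (q (y k - z)) \<le> approx_dist (s k) s"
    and upper: "approx_dist (s k) s \<le> ennreal (C^3 * C^3 * q (y k - z))" for k
    using le_approx_dist[OF s y s] approx_dist_le[OF s y s] by auto
  show "ennreal (q (y n - z)) \<le> H n"
    unfolding H_def using lower[of n] by (auto intro: SUP_upper2)
  have "(\<lambda>k. approx_dist (s k) s) \<longlonglongrightarrow> 0"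
    using upper by (intro tendsto_sandwich[OF _ _ tendsto_const tendsto_ennreal_cmult_0[OF y, of "C^3 * C^3"]]) auto
  then show "H \<longlonglongrightarrow> 0"
    unfolding H_def by (rule tendsto_tail_SUP_0)
  have "approx_dist (s k) s \<le> ennreal (C^3 * C^3 * (C * (1 + C))) * F" for k
  proof -
    have "approx_dist (s k) s \<le> ennreal (C^3 * C^3) * ennreal (q (y k - z))"
      using upper[of k] one_le_C by (simp add: ennreal_mult)
    also have "\<dots> \<le> ennreal (C^3 * C^3) * (ennreal (C * (1 + C)) * F)"
      by (intro mult_left_mono dist_to_limit_le[OF y bound]) auto
    finally show ?thesis
      using one_le_C by (simp add: ennreal_mult mult.assoc)
  qed
  then show "H 0 \<le> ennreal (C^3 * C^3 * (C * (1 + C))) * F"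
    unfolding H_def by (intro SUP_least)
qed

lemma borel_measurable_approx_dist:
  assumes "\<And>k j. simple_function M (s k j)"
  shows "(\<lambda>\<omega>. approx_dist (\<lambda>j. s k j \<omega>) (\<lambda>m i. s m i \<omega>)) \<in> borel_measurable M"
proof -
  have "simple_function M ((\<lambda>v. ennreal (C^3 * q v)) \<circ> (\<lambda>\<omega>. s k j \<omega> - s m i \<omega>))" for j m i
    using assms by (intro simple_function_compose simple_function_diff)
  then have "(\<lambda>\<omega>. ennreal (C^3 * q (s k j \<omega> - s m i \<omega>))) \<in> borel_measurable M" for j m i
    by (simp add: o_def borel_measurable_simple_function)
  then show ?thesis
    unfolding approx_dist_def by (intro borel_measurable_liminf)
qed

lemma measurable_majorant:
  assumes "\<And>n. strongly_measurable M q (xs n)"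
    and "AE \<omega> in M. (\<lambda>n. q (xs n \<omega> - x \<omega>)) \<longlonglongrightarrow> 0"
    and "\<And>n. AE \<omega> in M. ennreal (q (xs n \<omega>)) \<le> f \<omega>"
  obtains H where "\<And>n. H n \<in> borel_measurable M"
    and "\<And>n \<omega>. H (Suc n) \<omega> \<le> H n \<omega>"
    and "AE \<omega> in M. \<forall>n. ennreal (q (xs n \<omega> - x \<omega>)) \<le> H n \<omega>"
    and "AE \<omega> in M. (\<lambda>n. H n \<omega>) \<longlonglongrightarrow> 0"
    and "AE \<omega> in M. H 0 \<omega> \<le> ennreal (C^3 * C^3 * (C * (1 + C))) * f \<omega>"
proof -
  obtain s where simple: "\<And>n k. simple_function M (s n k)"
    and approx: "\<And>n. AE \<omega> in M. (\<lambda>k. q (s n k \<omega> - xs n \<omega>)) \<longlonglongrightarrow> 0"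
    by (rule strongly_measurable_approximations[of M q xs, OF assms(1)]) blast
  define H where "H n \<omega> = (SUP k\<in>{n..}. approx_dist (\<lambda>j. s k j \<omega>) (\<lambda>m i. s m i \<omega>))" for n \<omega>
  have meas: "H n \<in> borel_measurable M" for n
    unfolding H_def using borel_measurable_approx_dist[OF simple] by (intro borel_measurable_SUP) auto
  have dec: "H (Suc n) \<omega> \<le> H n \<omega>" for n \<omega>
    unfolding H_def by (intro SUP_subset_mono) auto
  have "AE \<omega> in M. (\<forall>k. (\<lambda>j. q (s k j \<omega> - xs k \<omega>)) \<longlonglongrightarrow> 0) \<and> (\<forall>n. ennreal (q (xs n \<omega>)) \<le> f \<omega>)"
    using approx assms(3) by (simp add: AE_all_countable)
  then have "AE \<omega> in M. (\<forall>n. ennreal (q (xs n \<omega> - x \<omega>)) \<le> H n \<omega>) \<and> (\<lambda>n. H n \<omega>) \<longlonglongrightarrow> 0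
      \<and> H 0 \<omega> \<le> ennreal (C^3 * C^3 * (C * (1 + C))) * f \<omega>"
    using assms(2)
  proof eventually_elim
    case (elim \<omega>)
    then have "\<And>k. (\<lambda>j. q (s k j \<omega> - xs k \<omega>)) \<longlonglongrightarrow> 0" "(\<lambda>n. q (xs n \<omega> - x \<omega>)) \<longlonglongrightarrow> 0"
      "\<And>n. ennreal (q (xs n \<omega>)) \<le> f \<omega>"
      by blast+
    note bounds = tail_SUP_approx_dist[where s="\<lambda>k j. s k j \<omega>" and y="\<lambda>n. xs n \<omega>", OF this]
    show ?case
      unfolding H_def using bounds by blast
  qed
  then show thesis
    using that[of H, OF meas dec] by (simp add: AE_conj_iff)
qed

end

lemma quasi_banach_imp_quasi_norm:
  assumes "quasi_banach q"
  obtains C where "quasi_norm q C"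
proof -
  have nonneg: "\<And>x. 0 \<le> q x" and hom: "\<And>a x. q (a *\<^sub>R x) = \<bar>a\<bar> * q x"
    using assms by (simp_all add: quasi_banach_def)
  have "\<exists>C0. \<forall>x y. q (x + y) \<le> C0 * (q x + q y)"
    using assms by (simp add: quasi_banach_def)
  then obtain C0 where triangle: "\<And>x y. q (x + y) \<le> C0 * (q x + q y)"
    by blast
  have "quasi_norm q (max C0 1)"
  proof
    show "q (- x) = q x" for x
      using hom[of "-1" x] by simp
    show "q (x + y) \<le> max C0 1 * (q x + q y)" for x y
      using triangle[of x y] mult_right_mono[of C0 "max C0 1" "q x + q y"] nonneg[of x] nonneg[of y]
      by linarith
  qed (simp_all add: nonneg)
  then show thesis by (rule that)
qed

lemma dominatingD:
  assumes "dominating M \<rho> f"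
    and "\<And>n. fs n \<in> borel_measurable M"
    and "\<And>n. AE \<omega> in M. fs (Suc n) \<omega> \<le> fs n \<omega>"
    and "AE \<omega> in M. fs 0 \<omega> \<le> f \<omega>"
    and "AE \<omega> in M. (\<lambda>n. fs n \<omega>) \<longlonglongrightarrow> 0"
  shows "(\<lambda>n. \<rho> (fs n)) \<longlonglongrightarrow> 0"
  using assms unfolding dominating_def by simp

lemma dominating_cmult:
  assumes \<rho>: "function_quasi_norm M \<rho>" and f: "dominating M \<rho> f" and c: "0 < c"
  shows "dominating M \<rho> (\<lambda>\<omega>. ennreal c * f \<omega>)"
proof -
  have hom: "\<rho> (\<lambda>\<omega>. ennreal t * g \<omega>) = ennreal t * \<rho> g" if "g \<in> borel_measurable M" "0 \<le> t" for g t
    using function_quasi_norm_def[THEN iffD1, OF \<rho>, THEN conjunct1] that by blast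
  have f_meas: "f \<in> borel_measurable M" and f_fin: "\<rho> f < \<infinity>"
    using f unfolding dominating_def by simp_all
  have "(\<lambda>n. \<rho> (fs n)) \<longlonglongrightarrow> 0"
    if meas: "\<forall>n. fs n \<in> borel_measurable M"
      and dec: "\<forall>n. AE \<omega> in M. fs (Suc n) \<omega> \<le> fs n \<omega>"
      and dom: "AE \<omega> in M. fs 0 \<omega> \<le> ennreal c * f \<omega>"
      and lim: "AE \<omega> in M. (\<lambda>n. fs n \<omega>) \<longlonglongrightarrow> 0" for fs
  proof -
    define gs where "gs n \<omega> = ennreal (1 / c) * fs n \<omega>" for n \<omega>
    have cancel: "ennreal (1 / c) * (ennreal c * r) = r" for r
      using c by (simp add: mult.assoc[symmetric] flip: ennreal_mult)
    have gs_meas: "gs n \<in> borel_measurable M" for n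
      unfolding gs_def using meas by (intro borel_measurable_times_ennreal borel_measurable_const) auto
    have "(\<lambda>n. \<rho> (gs n)) \<longlonglongrightarrow> 0"
    proof (rule dominatingD[OF f gs_meas])
      show "AE \<omega> in M. gs (Suc n) \<omega> \<le> gs n \<omega>" for n
        using dec[rule_format, of n] by eventually_elim (simp add: gs_def mult_left_mono)
      show "AE \<omega> in M. gs 0 \<omega> \<le> f \<omega>"
        using dom by eventually_elim (metis cancel gs_def mult_left_mono zero_le)
      show "AE \<omega> in M. (\<lambda>n. gs n \<omega>) \<longlonglongrightarrow> 0"
        using lim
      proof eventually_elim
        case (elim \<omega>)
        then have "(\<lambda>n. ennreal (1 / c) * fs n \<omega>) \<longlonglongrightarrow> ennreal (1 / c) * 0"
          by (intro ennreal_tendsto_cmult) auto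
        then show ?case by (simp add: gs_def)
      qed
    qed
    moreover have "\<rho> (fs n) = ennreal c * \<rho> (gs n)" for n
    proof -
      have "fs n = (\<lambda>\<omega>. ennreal c * gs n \<omega>)"
        using c by (auto simp: gs_def mult.assoc[symmetric] simp flip: ennreal_mult)
      then show ?thesis using hom[OF gs_meas] c by simp
    qed
    ultimately show ?thesis
      using ennreal_tendsto_cmult[of "ennreal c" "\<lambda>n. \<rho> (gs n)" 0] by simp
  qed
  moreover have "\<rho> (\<lambda>\<omega>. ennreal c * f \<omega>) < \<infinity>"
    using hom[OF f_meas] c f_fin by (simp add: ennreal_mult_less_top)
  ultimately show ?thesis
    using f_meas unfolding dominating_def by simp
qed

lemma rho_ext_le:
  assumes "h \<in> borel_measurable M" and "AE \<omega> in M. g \<omega> \<le> h \<omega>"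
  shows "rho_ext M \<rho> g \<le> \<rho> h"
  unfolding rho_ext_def using assms by (auto intro: INF_lower)

theorem proposition3p21:
  fixes M :: "'a measure" and \<rho> :: "('a \<Rightarrow> ennreal) \<Rightarrow> ennreal" and f :: "'a \<Rightarrow> ennreal"
    and q :: "'b::real_vector \<Rightarrow> real" and xs :: "nat \<Rightarrow> 'a \<Rightarrow> 'b" and x :: "'a \<Rightarrow> 'b"
  assumes "sigma_finite_measure M"
    and "function_quasi_norm M \<rho>"
    and "dominating M \<rho> f"
    and "quasi_banach q"
    and "\<And>n. strongly_measurable M q (xs n)"
    and "AE \<omega> in M. (\<lambda>n. q (xs n \<omega> - x \<omega>)) \<longlonglongrightarrow> 0"
    and "\<And>n. AE \<omega> in M. ennreal (q (xs n \<omega>)) \<le> f \<omega>"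
  shows "(\<lambda>n. rho_ext M \<rho> (\<lambda>\<omega>. ennreal (q (xs n \<omega> - x \<omega>)))) \<longlonglongrightarrow> 0"
proof -
  obtain C where "quasi_norm q C"
    using quasi_banach_imp_quasi_norm[OF assms(4)] .
  then interpret quasi_norm q C .
  obtain H where H_meas: "\<And>n. H n \<in> borel_measurable M"
    and H_dec: "\<And>n \<omega>. H (Suc n) \<omega> \<le> H n \<omega>"
    and H_ge: "AE \<omega> in M. \<forall>n. ennreal (q (xs n \<omega> - x \<omega>)) \<le> H n \<omega>"
    and H_lim: "AE \<omega> in M. (\<lambda>n. H n \<omega>) \<longlonglongrightarrow> 0"
    and H_le: "AE \<omega> in M. H 0 \<omega> \<le> ennreal (C^3 * C^3 * (C * (1 + C))) * f \<omega>"
    using measurable_majorant[OF assms(5-7)] by blast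
  have "dominating M \<rho> (\<lambda>\<omega>. ennreal (C^3 * C^3 * (C * (1 + C))) * f \<omega>)"
    using one_le_C by (intro dominating_cmult[OF assms(2,3)]) simp
  then have \<rho>_H: "(\<lambda>n. \<rho> (H n)) \<longlonglongrightarrow> 0"
    by (rule dominatingD[OF _ H_meas AE_I2 H_le H_lim]) (rule H_dec)
  have "rho_ext M \<rho> (\<lambda>\<omega>. ennreal (q (xs n \<omega> - x \<omega>))) \<le> \<rho> (H n)" for n
    using H_ge by (intro rho_ext_le[OF H_meas]) (auto elim: eventually_mono)
  then show ?thesis
    by (intro tendsto_sandwich[OF always_eventually always_eventually tendsto_const \<rho>_H]) auto
qed

end
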